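(* Let $H\in C^2(\mathbb{R}^2)$ satisfy (H1) and (H2). Then: (i) $\tilde\tau_H\in C^0(\mathbb{R}^2)$, $\tilde\tau_H(0)=\frac12$, and $\tilde\tau_H(p)\ge\frac12\Big[\frac{\lambda_H(H(p))}{\Lambda_H(H(p))}\Big]^2$ for all $p\ne0$; (ii) if $H^\gamma$ is convex on $H^{-1}([0,R])$ for some $\gamma\in[\frac12,1)$ and $R>0$, then $\tilde\tau_H\ge1-\gamma$ on $H^{-1}([0,R])$.
   Context: Local strong convexity/concavity: for every bounded convex $U\subset\mathbb{R}^2$ there is $\lambda>0$ (resp. $\Lambda>0$) with $H(p)-\frac\lambda2|p|^2$ (resp. $\frac\Lambda2|p|^2-H(p)$) convex on $U$. (H1): $H$ locally strongly convex and locally strongly concave. (H2): $H(0)=\min H=0$. $\lambda_H(R):=\sup_{\epsilon>0}\sup\{\lambda>0: H-\frac\lambda2|p|^2\text{ convex on }H^{-1}([0,R+\epsilon))\}$, $\Lambda_H(R):=\inf_{\epsilon>0}\inf\{\Lambda>0:\frac\Lambda2|p|^2-H\text{ convex on }H^{-1}([0,R+\epsilon))\}$. $\tilde\tau_H(0)=\frac12$ and $\tilde\tau_H(p)=H(p)/\langle[D^2_{pp}H(p)]^{-1}D_pH(p),D_pH(p)\rangle$ for $p\ne0$. *)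

theory Defs
  imports "HOL-Analysis.Analysis"
begin

definition C2_with :: "(real^2 \<Rightarrow> real) \<Rightarrow> (real^2 \<Rightarrow> real^2) \<Rightarrow> (real^2 \<Rightarrow> real^2^2) \<Rightarrow> bool" where
  "C2_with H DH D2H \<longleftrightarrow>
     (\<forall>p. (H has_derivative (\<lambda>v. DH p \<bullet> v)) (at p)) \<and>
     (\<forall>p. (DH has_derivative (\<lambda>v. D2H p *v v)) (at p)) \<and>
     continuous_on UNIV D2H"

definition loc_strongly_convex :: "(real^2 \<Rightarrow> real) \<Rightarrow> bool" where
  "loc_strongly_convex H \<longleftrightarrow>
     (\<forall>U. bounded U \<and> convex U \<longrightarrow> (\<exists>l>0. convex_on U (\<lambda>p. H p - l / 2 * (norm p)^2)))"

definition loc_strongly_concave :: "(real^2 \<Rightarrow> real) \<Rightarrow> bool" where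
  "loc_strongly_concave H \<longleftrightarrow>
     (\<forall>U. bounded U \<and> convex U \<longrightarrow> (\<exists>L>0. convex_on U (\<lambda>p. L / 2 * (norm p)^2 - H p)))"

definition lambdaH :: "(real^2 \<Rightarrow> real) \<Rightarrow> real \<Rightarrow> real" where
  "lambdaH H R = (SUP e\<in>{0<..}. Sup {l. l > 0 \<and>
       convex_on (H -` {0..<R + e}) (\<lambda>p. H p - l / 2 * (norm p)^2)})"

definition LambdaH :: "(real^2 \<Rightarrow> real) \<Rightarrow> real \<Rightarrow> real" where
  "LambdaH H R = (INF e\<in>{0<..}. Inf {L. L > 0 \<and>
       convex_on (H -` {0..<R + e}) (\<lambda>p. L / 2 * (norm p)^2 - H p)})"

definition tau_tilde :: "(real^2 \<Rightarrow> real) \<Rightarrow> (real^2 \<Rightarrow> real^2) \<Rightarrow> (real^2 \<Rightarrow> real^2^2) \<Rightarrow> real^2 \<Rightarrow> real" where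
  "tau_tilde H DH D2H p =
     (if p = 0 then 1/2 else H p / ((matrix_inv (D2H p) *v DH p) \<bullet> DH p))"

end

theory Submission
  imports Defs
begin

text \<open>On a sublevel set \<open>{H < c}\<close> where \<open>H - l/2 |p|^2\<close> and \<open>L/2 |p|^2 - H\<close> are convex,
the Hessian satisfies \<open>l \<le> D\<^sup>2H \<le> L\<close>. Hence the Newton quantity
\<open>\<langle>(D\<^sup>2H)\<^sup>-\<^sup>1 DH, DH\<rangle>\<close> is at most \<open>|DH|^2 / l\<close>, while a gradient step of length \<open>1/L\<close>
stays in the sublevel set and \<open>H \<ge> 0\<close>, which gives the descent bound \<open>|DH|^2 \<le> 2 L H\<close>.
Thus \<open>\<tau> \<ge> l/(2L) \<ge> (l/L)^2/2\<close>, and (i) follows by passing to the supremum over \<open>l\<close> and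
the infimum over \<open>L\<close>. For (ii), convexity of \<open>H\<^sup>\<gamma>\<close> is the second-order inequality
\<open>H D\<^sup>2H \<ge> (1 - \<gamma>) DH \<otimes> DH\<close>; testing it with the Newton direction
\<open>(D\<^sup>2H)\<^sup>-\<^sup>1 DH\<close> gives \<open>H \<ge> (1 - \<gamma>) \<langle>(D\<^sup>2H)\<^sup>-\<^sup>1 DH, DH\<rangle>\<close>.
Away from 0, \<open>\<tau>\<close> is continuous because inverting a uniformly positive definite matrix
field is; at 0, Taylor expansion gives \<open>H(p) = \<langle>D\<^sup>2H(0) p, p\<rangle>/2 + o(|p|^2)\<close> and
\<open>\<langle>(D\<^sup>2H)\<^sup>-\<^sup>1 DH, DH\<rangle>(p) = \<langle>D\<^sup>2H(0) p, p\<rangle> + o(|p|^2)\<close>, so \<open>\<tau>(p) \<rightarrow> 1/2\<close>.\<close>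

section \<open>Convex functions and their derivatives\<close>

lemma has_real_derivative_along_line:
  fixes f :: "'a::real_normed_vector \<Rightarrow> real"
  assumes "(f has_derivative f') (at (p + t *\<^sub>R v))"
  shows "((\<lambda>s. f (p + s *\<^sub>R v)) has_real_derivative f' v) (at t)"
proof -
  have "((\<lambda>s. p + s *\<^sub>R v) has_derivative (\<lambda>s. s *\<^sub>R v)) (at t)"
    by (auto intro!: derivative_eq_intros)
  from has_derivative_compose[OF this assms]
  have "((\<lambda>s. f (p + s *\<^sub>R v)) has_derivative (\<lambda>s. f' (s *\<^sub>R v))) (at t)" .
  moreover have "(\<lambda>s. f' (s *\<^sub>R v)) = (*) (f' v)"
  proof -
    interpret bounded_linear f'
      using assms by (rule has_derivative_bounded_linear)
    show ?thesis by (auto simp: scale)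
  qed
  ultimately show ?thesis
    by (simp add: has_field_derivative_def)
qed

lemma DERIV_le_if_right_quotients_le:
  assumes "(g has_real_derivative D) (at t)"
    and "\<forall>\<^sub>F s in at_right t. (g s - g t) / (s - t) \<le> c"
  shows "D \<le> c"
proof -
  have "((\<lambda>s. (g s - g t) / (s - t)) \<longlongrightarrow> D) (at_right t)"
    using assms(1) by (auto simp: has_field_derivative_iff filterlim_at_split)
  then show ?thesis
    using assms(2) by (rule tendsto_upperbound) simp
qed

lemma DERIV_ge_if_right_quotients_ge:
  assumes "(g has_real_derivative D) (at t)"
    and "\<forall>\<^sub>F s in at_right t. c \<le> (g s - g t) / (s - t)"
  shows "c \<le> D"
proof -
  have "((\<lambda>s. (g s - g t) / (s - t)) \<longlongrightarrow> D) (at_right t)"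
    using assms(1) by (auto simp: has_field_derivative_iff filterlim_at_split)
  then show ?thesis
    using assms(2) by (rule tendsto_lowerbound) simp
qed

lemma convex_on_above_tangent:
  fixes f :: "'a::real_normed_vector \<Rightarrow> real"
  assumes f: "convex_on U f" and "p \<in> U" "q \<in> U"
    and "(f has_derivative f') (at p)"
  shows "f p + f' (q - p) \<le> f q"
proof -
  have "((\<lambda>s. f (p + s *\<^sub>R (q - p))) has_real_derivative f' (q - p)) (at 0)"
    using has_real_derivative_along_line[of f f' p 0 "q - p"] assms(4) by simp
  moreover have "\<forall>\<^sub>F s in at_right 0. s \<in> {0<..<1::real}"
    by (rule eventually_at_right_real) simp
  then have "\<forall>\<^sub>F s in at_right 0. (f (p + s *\<^sub>R (q - p)) - f (p + 0 *\<^sub>R (q - p))) / (s - 0) \<le> f q - f p"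
  proof eventually_elim
    case (elim s)
    have "f (p + s *\<^sub>R (q - p)) = f ((1 - s) *\<^sub>R p + s *\<^sub>R q)"
      by (simp add: algebra_simps)
    also have "\<dots> \<le> (1 - s) * f p + s * f q"
      using convex_onD[OF f, of s p q] elim assms(2,3) by simp
    finally show ?case
      using elim by (simp add: divide_simps algebra_simps)
  qed
  ultimately have "f' (q - p) \<le> f q - f p"
    by (rule DERIV_le_if_right_quotients_le)
  then show ?thesis by simp
qed

lemma convex_on_gradient_monotone:
  fixes f :: "'a::real_inner \<Rightarrow> real"
  assumes f: "convex_on U f" and U: "x \<in> U" "y \<in> U"
    and "(f has_derivative (\<lambda>v. Df x \<bullet> v)) (at x)" "(f has_derivative (\<lambda>v. Df y \<bullet> v)) (at y)"
  shows "0 \<le> (Df y - Df x) \<bullet> (y - x)"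
proof -
  have "f x + Df x \<bullet> (y - x) \<le> f y" "f y + Df y \<bullet> (x - y) \<le> f x"
    using convex_on_above_tangent[OF f] U assms(4,5) by auto
  then show ?thesis
    by (simp add: inner_diff_left inner_diff_right)
qed

lemma convex_on_second_derivative_nonneg:
  fixes f :: "'a::real_inner \<Rightarrow> real"
  assumes f: "convex_on U f" and "open U" "x \<in> U"
    and Df: "\<And>y. y \<in> U \<Longrightarrow> (f has_derivative (\<lambda>v. Df y \<bullet> v)) (at y)"
    and B: "(Df has_derivative B) (at x)"
  shows "0 \<le> B v \<bullet> v"
proof -
  have "((\<lambda>y. Df y \<bullet> v) has_derivative (\<lambda>w. B w \<bullet> v)) (at (x + 0 *\<^sub>R v))"
    using has_derivative_inner_left[OF B] by simp
  then have "((\<lambda>s. Df (x + s *\<^sub>R v) \<bullet> v) has_real_derivative B v \<bullet> v) (at 0)"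
    by (rule has_real_derivative_along_line)
  moreover have "((\<lambda>s. x + s *\<^sub>R v) \<longlongrightarrow> x + 0 *\<^sub>R v) (at_right 0)"
    by (intro tendsto_intros)
  then have "\<forall>\<^sub>F s in at_right 0. x + s *\<^sub>R v \<in> U"
    using assms(2,3) by (simp add: topological_tendstoD)
  then have "\<forall>\<^sub>F s in at_right 0. 0 \<le> (Df (x + s *\<^sub>R v) \<bullet> v - Df (x + 0 *\<^sub>R v) \<bullet> v) / (s - 0)"
    using eventually_at_right_less[of 0]
  proof eventually_elim
    case (elim s)
    have "0 \<le> (Df (x + s *\<^sub>R v) - Df x) \<bullet> (x + s *\<^sub>R v - x)"
      by (rule convex_on_gradient_monotone[OF f assms(3) elim(1) Df Df]) (use assms(3) elim in auto)
    then have "0 \<le> s * (Df (x + s *\<^sub>R v) \<bullet> v - Df x \<bullet> v)"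
      by (simp add: inner_diff_left)
    then show ?case
      using elim(2) by (simp add: zero_le_mult_iff)
  qed
  ultimately show ?thesis
    by (rule DERIV_ge_if_right_quotients_ge)
qed

lemma convex_on_norm_power2:
  fixes S :: "'a::real_inner set"
  assumes "convex S"
  shows "convex_on S (\<lambda>x. (norm x)^2)"
proof (rule convex_onI[OF _ assms])
  fix t :: real and x y :: 'a
  assume "0 < t" "t < 1"
  have "(norm ((1 - t) *\<^sub>R x + t *\<^sub>R y))^2
      = (1 - t) * (norm x)^2 + t * (norm y)^2 - t * (1 - t) * (norm (x - y))^2"
    by (simp add: power2_norm_eq_inner inner_add_left inner_add_right inner_diff_left
        inner_diff_right inner_commute algebra_simps)
  then show "(norm ((1 - t) *\<^sub>R x + t *\<^sub>R y))^2 \<le> (1 - t) * (norm x)^2 + t * (norm y)^2"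
    using \<open>0 < t\<close> \<open>t < 1\<close> by simp
qed

lemma has_derivative_norm_power2:
  fixes x :: "'a::real_inner"
  shows "((\<lambda>x. (norm x)^2) has_derivative (\<lambda>v. 2 * (x \<bullet> v))) (at x)"
  unfolding power2_norm_eq_inner
  by (auto intro!: derivative_eq_intros simp: inner_commute)

lemma above_tangent_plus_quadratic:
  fixes f :: "'a::real_inner \<Rightarrow> real"
  assumes "convex_on U (\<lambda>x. f x - l / 2 * (norm x)^2)" "p \<in> U" "z \<in> U"
    and "(f has_derivative (\<lambda>v. Df \<bullet> v)) (at p)"
  shows "f p + Df \<bullet> (z - p) + l / 2 * (norm (z - p))^2 \<le> f z"
proof -
  have "((\<lambda>x. f x - l / 2 * (norm x)^2) has_derivative (\<lambda>v. Df \<bullet> v - l / 2 * (2 * (p \<bullet> v)))) (at p)"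
    by (intro derivative_intros assms(4) has_derivative_norm_power2)
  from convex_on_above_tangent[OF assms(1-3) this] show ?thesis
    by (simp add: power2_norm_eq_inner inner_diff_left inner_diff_right inner_commute algebra_simps)
qed

lemma below_tangent_plus_quadratic:
  fixes f :: "'a::real_inner \<Rightarrow> real"
  assumes "convex_on U (\<lambda>x. L / 2 * (norm x)^2 - f x)" "p \<in> U" "z \<in> U"
    and "(f has_derivative (\<lambda>v. Df \<bullet> v)) (at p)"
  shows "f z \<le> f p + Df \<bullet> (z - p) + L / 2 * (norm (z - p))^2"
proof -
  have "((\<lambda>x. L / 2 * (norm x)^2 - f x) has_derivative (\<lambda>v. L / 2 * (2 * (p \<bullet> v)) - Df \<bullet> v)) (at p)"
    by (intro derivative_intros assms(4) has_derivative_norm_power2)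
  from convex_on_above_tangent[OF assms(1-3) this] show ?thesis
    by (simp add: power2_norm_eq_inner inner_diff_left inner_diff_right inner_commute algebra_simps)
qed

lemma hessian_lower_bound:
  fixes f :: "'a::real_inner \<Rightarrow> real"
  assumes "convex_on U (\<lambda>x. f x - l / 2 * (norm x)^2)" "open U" "x \<in> U"
    and Df: "\<And>y. y \<in> U \<Longrightarrow> (f has_derivative (\<lambda>v. Df y \<bullet> v)) (at y)"
    and B: "(Df has_derivative B) (at x)"
  shows "l * (norm v)^2 \<le> B v \<bullet> v"
proof -
  have grad: "((\<lambda>x. f x - l / 2 * (norm x)^2) has_derivative (\<lambda>v. (Df y - l *\<^sub>R y) \<bullet> v)) (at y)"
    if "y \<in> U" for y
  proof -
    have "((\<lambda>x. f x - l / 2 * (norm x)^2) has_derivative (\<lambda>v. Df y \<bullet> v - l / 2 * (2 * (y \<bullet> v)))) (at y)"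
      by (intro derivative_intros Df[OF that] has_derivative_norm_power2)
    then show ?thesis
      by (simp add: inner_diff_left)
  qed
  have hess: "((\<lambda>y. Df y - l *\<^sub>R y) has_derivative (\<lambda>v. B v - l *\<^sub>R v)) (at x)"
    using B by (auto intro!: derivative_eq_intros)
  have "0 \<le> (B v - l *\<^sub>R v) \<bullet> v"
    by (rule convex_on_second_derivative_nonneg[OF assms(1-3) grad hess])
  then show ?thesis
    by (simp add: inner_diff_left power2_norm_eq_inner)
qed

lemma hessian_upper_bound:
  fixes f :: "'a::real_inner \<Rightarrow> real"
  assumes "convex_on U (\<lambda>x. L / 2 * (norm x)^2 - f x)" "open U" "x \<in> U"
    and Df: "\<And>y. y \<in> U \<Longrightarrow> (f has_derivative (\<lambda>v. Df y \<bullet> v)) (at y)"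
    and B: "(Df has_derivative B) (at x)"
  shows "B v \<bullet> v \<le> L * (norm v)^2"
proof -
  have grad: "((\<lambda>x. L / 2 * (norm x)^2 - f x) has_derivative (\<lambda>v. (L *\<^sub>R y - Df y) \<bullet> v)) (at y)"
    if "y \<in> U" for y
  proof -
    have "((\<lambda>x. L / 2 * (norm x)^2 - f x) has_derivative (\<lambda>v. L / 2 * (2 * (y \<bullet> v)) - Df y \<bullet> v)) (at y)"
      by (intro derivative_intros Df[OF that] has_derivative_norm_power2)
    then show ?thesis
      by (simp add: inner_diff_left)
  qed
  have hess: "((\<lambda>y. L *\<^sub>R y - Df y) has_derivative (\<lambda>v. L *\<^sub>R v - B v)) (at x)"
    using B by (auto intro!: derivative_eq_intros)
  have "0 \<le> (L *\<^sub>R v - B v) \<bullet> v"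
    by (rule convex_on_second_derivative_nonneg[OF assms(1-3) grad hess])
  then show ?thesis
    by (simp add: inner_diff_left power2_norm_eq_inner)
qed

lemma has_derivative_powr_const:
  fixes f :: "'a::real_normed_vector \<Rightarrow> real"
  assumes "(f has_derivative f') (at x)" "0 < f x"
  shows "((\<lambda>y. f y powr a) has_derivative (\<lambda>v. a * f x powr (a - 1) * f' v)) (at x)"
proof -
  have "((\<lambda>z. z powr a) has_derivative (*) (a * f x powr (a - 1))) (at (f x))"
    using has_real_derivative_powr[OF assms(2), of a] by (simp add: has_field_derivative_def)
  from has_derivative_compose[OF assms(1) this] show ?thesis .
qed

section \<open>Uniformly positive definite matrices\<close>

definition coercive_matrix :: "real \<Rightarrow> real^'n^'n \<Rightarrow> bool" where
  "coercive_matrix l A \<longleftrightarrow> 0 < l \<and> (\<forall>w. l * (norm w)^2 \<le> (A *v w) \<bullet> w)"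

lemma coercive_matrixD:
  "coercive_matrix l A \<Longrightarrow> 0 < l"
  "coercive_matrix l A \<Longrightarrow> l * (norm w)^2 \<le> (A *v w) \<bullet> w"
  by (auto simp: coercive_matrix_def)

lemma coercive_matrix_inverse:
  assumes "coercive_matrix l A"
  shows "A ** matrix_inv A = mat 1 \<and> matrix_inv A ** A = mat 1"
proof -
  have "x = 0" if "A *v x = 0" for x
    using coercive_matrixD(1)[OF assms] coercive_matrixD(2)[OF assms, of x] that
    by (simp add: mult_le_0_iff)
  then have "invertible A"
    using matrix_left_invertible_ker invertible_left_inverse by blast
  then show ?thesis
    unfolding invertible_def matrix_inv_def by (rule someI_ex)
qed

lemma coercive_matrix_inv_right:
  "coercive_matrix l A \<Longrightarrow> A *v (matrix_inv A *v u) = u"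
  and coercive_matrix_inv_left:
  "coercive_matrix l A \<Longrightarrow> matrix_inv A *v (A *v u) = u"
  by (auto dest!: coercive_matrix_inverse simp: matrix_vector_mul_assoc)

lemma coercive_matrix_inv_inner_ge:
  assumes "coercive_matrix l A"
  shows "l * (norm (matrix_inv A *v u))^2 \<le> (matrix_inv A *v u) \<bullet> u"
  using coercive_matrixD(2)[OF assms, of "matrix_inv A *v u"]
  by (simp add: coercive_matrix_inv_right[OF assms] inner_commute)

lemma coercive_matrix_inv_norm_le:
  assumes A: "coercive_matrix l A"
  shows "l * norm (matrix_inv A *v u) \<le> norm u"
proof -
  let ?y = "matrix_inv A *v u"
  have "norm ?y * (l * norm ?y) \<le> norm ?y * norm u"
    using coercive_matrix_inv_inner_ge[OF A, of u] norm_cauchy_schwarz[of ?y u]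
    by (simp add: power2_eq_square algebra_simps)
  then show ?thesis
    using coercive_matrixD(1)[OF A] by (cases "?y = 0") auto
qed

lemma coercive_matrix_inv_inner_le:
  assumes A: "coercive_matrix l A"
  shows "(matrix_inv A *v u) \<bullet> u \<le> (norm u)^2 / l"
proof -
  have "(matrix_inv A *v u) \<bullet> u \<le> norm (matrix_inv A *v u) * norm u"
    by (rule norm_cauchy_schwarz)
  also have "\<dots> \<le> (norm u / l) * norm u"
    using coercive_matrix_inv_norm_le[OF A, of u] coercive_matrixD(1)[OF A]
    by (intro mult_right_mono) (simp_all add: field_simps)
  finally show ?thesis
    by (simp add: power2_eq_square)
qed

lemma coercive_matrix_inv_inner_pos:
  assumes A: "coercive_matrix l A" and "u \<noteq> 0"
  shows "0 < (matrix_inv A *v u) \<bullet> u"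
proof -
  have "matrix_inv A *v u \<noteq> 0"
    using coercive_matrix_inv_right[OF A, of u] \<open>u \<noteq> 0\<close> by auto
  then have "0 < l * (norm (matrix_inv A *v u))^2"
    using coercive_matrixD(1)[OF A] by simp
  then show ?thesis
    using coercive_matrix_inv_inner_ge[OF A, of u] by linarith
qed

lemma norm_matrix_vector_mult_le:
  fixes A :: "real^'n^'m"
  shows "norm (A *v x) \<le> norm A * norm x"
proof -
  have "norm (A *v x) = L2_set (\<lambda>i. \<bar>A $ i \<bullet> x\<bar>) UNIV"
    by (simp add: norm_vec_def matrix_mult_dot)
  also have "\<dots> \<le> L2_set (\<lambda>i. norm (A $ i) * norm x) UNIV"
    by (rule L2_set_mono) (auto simp: Cauchy_Schwarz_ineq2)
  also have "\<dots> = norm A * norm x"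
    by (simp add: L2_set_left_distrib norm_vec_def[of A])
  finally show ?thesis .
qed

lemma tendsto_matrix_vector_mult [tendsto_intros]:
  fixes f :: "'a \<Rightarrow> real^'n^'m"
  assumes "(f \<longlongrightarrow> A) F" "(g \<longlongrightarrow> x) F"
  shows "((\<lambda>t. f t *v g t) \<longlongrightarrow> A *v x) F"
  unfolding matrix_vector_mult_def by (intro tendsto_intros assms)

lemma tendsto_coercive_matrix_inv:
  fixes A :: "'a \<Rightarrow> real^'n^'n"
  assumes A: "(A \<longlongrightarrow> A0) F" and g: "(g \<longlongrightarrow> g0) F"
    and coercive: "\<forall>\<^sub>F t in F. coercive_matrix l (A t)" and A0: "coercive_matrix l0 A0"
  shows "((\<lambda>t. matrix_inv (A t) *v g t) \<longlongrightarrow> matrix_inv A0 *v g0) F"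
proof -
  define y0 where "y0 = matrix_inv A0 *v g0"
  have "((\<lambda>t. norm (g t - A t *v y0)) \<longlongrightarrow> norm (g0 - A0 *v y0)) F"
    by (intro tendsto_intros A g)
  then have "((\<lambda>t. norm (g t - A t *v y0) / l) \<longlongrightarrow> 0) F"
    by (intro tendsto_divide_zero) (simp add: y0_def coercive_matrix_inv_right[OF A0])
  moreover have "\<forall>\<^sub>F t in F. norm (matrix_inv (A t) *v g t - y0) \<le> norm (g t - A t *v y0) / l"
    using coercive
  proof eventually_elim
    case (elim t)
    have "matrix_inv (A t) *v g t - y0 = matrix_inv (A t) *v (g t - A t *v y0)"
      by (simp add: matrix_vector_mult_diff_distrib coercive_matrix_inv_left[OF elim])
    then show ?case
      using coercive_matrix_inv_norm_le[OF elim, of "g t - A t *v y0"] coercive_matrixD(1)[OF elim]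
      by (simp add: field_simps)
  qed
  ultimately have "((\<lambda>t. matrix_inv (A t) *v g t - y0) \<longlongrightarrow> 0) F"
    by (rule Lim_null_comparison[rotated])
  then show ?thesis
    by (simp add: y0_def LIM_zero_iff)
qed

lemma matrix_inv_inner_approx:
  fixes A A0 :: "real^'n^'n"
  assumes A: "coercive_matrix l A" and g: "norm (g - A0 *v p) \<le> \<eta> * norm p"
    and AA0: "norm (A - A0) \<le> \<eta>" and "\<eta> \<le> 1"
  shows "\<bar>(matrix_inv A *v g) \<bullet> g - (A0 *v p) \<bullet> p\<bar> \<le> \<eta> * (2 * (norm A0 + 1) / l + 1) * (norm p)^2"
proof -
  define y where "y = matrix_inv A *v g"
  have l: "0 < l" and \<eta>: "0 \<le> \<eta>"
    using coercive_matrixD(1)[OF A] AA0 norm_ge_zero order_trans by blast+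
  have "norm (A *v p - A0 *v p) \<le> \<eta> * norm p"
    using norm_matrix_vector_mult_le[of "A - A0" p] AA0
    by (simp add: matrix_vector_mult_diff_rdistrib mult_right_mono order_trans)
  then have "norm (g - A *v p) \<le> 2 * \<eta> * norm p"
    using g norm_triangle_ineq4[of "g - A0 *v p" "A *v p - A0 *v p"] by simp
  moreover have "y - p = matrix_inv A *v (g - A *v p)"
    by (simp add: y_def matrix_vector_mult_diff_distrib coercive_matrix_inv_left[OF A])
  ultimately have "l * norm (y - p) \<le> 2 * \<eta> * norm p"
    using coercive_matrix_inv_norm_le[OF A, of "g - A *v p"] by simp
  then have yp: "norm (y - p) \<le> 2 * \<eta> * norm p / l"
    using l by (simp add: field_simps)
  have "norm g \<le> norm (A0 *v p) + norm (g - A0 *v p)"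
    by (rule norm_triangle_sub)
  also have "\<dots> \<le> (norm A0 + 1) * norm p"
    using norm_matrix_vector_mult_le[of A0 p] g \<open>\<eta> \<le> 1\<close> mult_right_mono[of \<eta> 1 "norm p"]
    by (simp add: algebra_simps)
  finally have gp: "norm g \<le> (norm A0 + 1) * norm p" .
  have "y \<bullet> g - (A0 *v p) \<bullet> p = (y - p) \<bullet> g + p \<bullet> (g - A0 *v p)"
    by (simp add: inner_diff_left inner_diff_right inner_commute)
  then have "\<bar>y \<bullet> g - (A0 *v p) \<bullet> p\<bar> \<le> \<bar>(y - p) \<bullet> g\<bar> + \<bar>p \<bullet> (g - A0 *v p)\<bar>"
    by simp
  also have "\<dots> \<le> norm (y - p) * norm g + norm p * norm (g - A0 *v p)"
    by (intro add_mono Cauchy_Schwarz_ineq2)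
  also have "\<dots> \<le> (2 * \<eta> * norm p / l) * ((norm A0 + 1) * norm p) + norm p * (\<eta> * norm p)"
    using yp gp g \<eta> l by (intro add_mono mult_mono mult_left_mono) auto
  also have "\<dots> = \<eta> * (2 * (norm A0 + 1) / l + 1) * (norm p)^2"
    using l by (simp add: power2_eq_square field_simps)
  finally show ?thesis
    by (simp add: y_def)
qed

lemma quotient_near_half:
  fixes h d q l P C \<eta> :: real
  assumes "\<bar>d - q\<bar> \<le> C * P" "\<bar>h - q / 2\<bar> \<le> \<eta> * P" "l * P \<le> q" "C \<le> l / 2" "0 < l" "0 < P"
  shows "\<bar>h / d - 1 / 2\<bar> \<le> (2 * \<eta> + C) / l"
proof -
  have "C * P \<le> l / 2 * P"
    using assms(4,6) by (simp add: mult_right_mono)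
  then have d: "l / 2 * P \<le> d"
    using assms(1,3) by (simp add: abs_le_iff algebra_simps)
  then have "0 < d"
    using assms(5,6) by (smt (verit) half_gt_zero mult_pos_pos)
  have "\<bar>h / d - 1 / 2\<bar> = \<bar>h - d / 2\<bar> / d"
    using \<open>0 < d\<close> by (simp add: field_simps abs_div)
  also have "\<dots> \<le> (\<eta> + C / 2) * P / (l / 2 * P)"
    using assms(1,2,5,6) d
    by (intro frac_le) (auto simp: abs_le_iff algebra_simps)
  also have "\<dots> = (2 * \<eta> + C) / l"
    using assms(5,6) by (simp add: field_simps)
  finally show ?thesis .
qed

lemma half_power2_divide_le:
  fixes a b t :: real
  assumes "0 \<le> a" "a \<le> b" "a \<le> 2 * t * b" "0 < t"
  shows "1/2 * (a / b)^2 \<le> t"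
proof (cases "b = 0")
  case True
  then show ?thesis
    using \<open>0 < t\<close> by simp
next
  case False
  then have "0 < b"
    using assms(1,2) by simp
  then have r: "0 \<le> a / b" "a / b \<le> 1" "a / b \<le> 2 * t"
    using assms(1-3) by (simp_all add: divide_le_eq)
  have "(a / b)^2 \<le> a / b"
    unfolding power2_eq_square by (rule mult_left_le[OF r(2) r(1)])
  then show ?thesis
    using \<open>a / b \<le> 2 * t\<close> by simp
qed

lemma SUP_Sup_le_mult_INF_Inf:
  fixes S T :: "real \<Rightarrow> real set"
  assumes "0 < k" and S: "\<And>e. 0 < e \<Longrightarrow> S e \<noteq> {}" and T: "\<And>e. 0 < e \<Longrightarrow> T e \<noteq> {}"
    and le: "\<And>e e' l L. 0 < e \<Longrightarrow> 0 < e' \<Longrightarrow> l \<in> S e \<Longrightarrow> L \<in> T e' \<Longrightarrow> l \<le> k * L"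
  shows "(SUP e\<in>{0<..}. Sup (S e)) \<le> k * (INF e\<in>{0<..}. Inf (T e))"
proof -
  have "(SUP e\<in>{0<..}. Sup (S e)) \<le> k * L" if "0 < e'" "L \<in> T e'" for e' L
    using S le that by (intro cSUP_least cSup_least) auto
  then have "(SUP e\<in>{0<..}. Sup (S e)) / k \<le> (INF e\<in>{0<..}. Inf (T e))"
    using T \<open>0 < k\<close> by (intro cINF_greatest cInf_greatest) (auto simp: field_simps)
  then show ?thesis
    using \<open>0 < k\<close> by (simp add: field_simps)
qed

lemma INF_Inf_nonneg:
  fixes T :: "real \<Rightarrow> real set"
  assumes "\<And>e. 0 < e \<Longrightarrow> T e \<noteq> {}" and "\<And>e L. L \<in> T e \<Longrightarrow> 0 \<le> L"
  shows "0 \<le> (INF e\<in>{0<..}. Inf (T e))"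
  using assms by (intro cINF_greatest cInf_greatest) auto

lemma SUP_Sup_nonneg:
  fixes S :: "real \<Rightarrow> real set"
  assumes S: "\<And>e. 0 < e \<Longrightarrow> S e \<noteq> {}" and "\<And>e l. l \<in> S e \<Longrightarrow> 0 \<le> l"
    and bdd: "\<And>e l. 0 < e \<Longrightarrow> l \<in> S e \<Longrightarrow> l \<le> B"
  shows "0 \<le> (SUP e\<in>{0<..}. Sup (S e))"
proof -
  obtain l where l: "l \<in> S 1"
    using S[of 1] by auto
  have "0 \<le> l"
    using assms(2) l .
  also have "l \<le> Sup (S 1)"
    using l bdd[of 1] by (intro cSup_upper) (auto simp: bdd_above_def)
  also have "Sup (S 1) \<le> (SUP e\<in>{0<..}. Sup (S e))"
    using S bdd by (intro cSUP_upper) (auto simp: bdd_above_def intro!: cSup_least)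
  finally show ?thesis .
qed

section \<open>Consequences of (H1) and (H2)\<close>

locale hamiltonian =
  fixes H :: "real^2 \<Rightarrow> real" and DH :: "real^2 \<Rightarrow> real^2" and D2H :: "real^2 \<Rightarrow> real^2^2"
  assumes C2: "C2_with H DH D2H"
    and strongly_convex: "loc_strongly_convex H"
    and strongly_concave: "loc_strongly_concave H"
    and H_0: "H 0 = 0" and H_nonneg: "\<And>p. 0 \<le> H p"
begin

lemma H_has_derivative: "(H has_derivative (\<lambda>v. DH p \<bullet> v)) (at p)"
  and DH_has_derivative: "(DH has_derivative (\<lambda>v. D2H p *v v)) (at p)"
  and isCont_D2H: "isCont D2H p"
  using C2 by (auto simp: C2_with_def continuous_on_eq_continuous_at)

lemma isCont_H: "isCont H p"
  using H_has_derivative by (rule has_derivative_continuous)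

lemma isCont_DH: "isCont DH p"
  using DH_has_derivative by (rule has_derivative_continuous)

lemma obtain_strong_convexity:
  assumes "bounded U" "convex U"
  obtains l where "0 < l" "convex_on U (\<lambda>p. H p - l / 2 * (norm p)^2)"
  using strongly_convex assms unfolding loc_strongly_convex_def by blast

lemma obtain_strong_concavity:
  assumes "bounded U" "convex U"
  obtains L where "0 < L" "convex_on U (\<lambda>p. L / 2 * (norm p)^2 - H p)"
  using strongly_concave assms unfolding loc_strongly_concave_def by blast

lemma DH_0: "DH 0 = 0"
proof -
  have "((\<lambda>s. H (0 + s *\<^sub>R DH 0)) has_real_derivative DH (0 + 0 *\<^sub>R DH 0) \<bullet> DH 0) (at 0)"
    by (rule has_real_derivative_along_line[OF H_has_derivative])
  then have "((\<lambda>s. H (s *\<^sub>R DH 0)) has_real_derivative DH 0 \<bullet> DH 0) (at 0)"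
    by simp
  then have "DH 0 \<bullet> DH 0 = 0"
    by (rule DERIV_local_min[where d = 1]) (simp_all add: H_0 H_nonneg)
  then show ?thesis
    by simp
qed

lemma convex_H: "convex_on UNIV H"
proof (rule convex_onI)
  fix t :: real and x y :: "real^2"
  assume t: "0 < t" "t < 1"
  let ?U = "ball 0 (norm x + norm y + 1)"
  obtain l where "0 < l" and l: "convex_on ?U (\<lambda>p. H p - l / 2 * (norm p)^2)"
    by (rule obtain_strong_convexity[OF bounded_ball convex_ball])
  have "convex_on ?U (\<lambda>p. (H p - l / 2 * (norm p)^2) + l / 2 * (norm p)^2)"
    using \<open>0 < l\<close> by (intro convex_on_add l convex_on_cmul convex_on_norm_power2) auto
  then have "convex_on ?U H"
    by simp
  moreover have "x \<in> ?U" "y \<in> ?U"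
    by (simp_all add: add_strict_increasing add_strict_increasing2)
  ultimately show "H ((1 - t) *\<^sub>R x + t *\<^sub>R y) \<le> (1 - t) * H x + t * H y"
    using t by (intro convex_onD) auto
qed simp

lemma H_scaleR_le:
  assumes "0 \<le> s" "s \<le> 1"
  shows "H (s *\<^sub>R p) \<le> s * H p"
  using convex_onD[OF convex_H, of s 0 p] assms by (simp add: H_0)

lemma H_ge_quadratic:
  assumes "convex_on U (\<lambda>p. H p - l / 2 * (norm p)^2)" "0 \<in> U" "x \<in> U"
  shows "l / 2 * (norm x)^2 \<le> H x"
  using above_tangent_plus_quadratic[OF assms H_has_derivative] by (simp add: H_0 DH_0)

lemma H_pos:
  assumes "x \<noteq> 0"
  shows "0 < H x"
proof -
  obtain l where "0 < l" and l: "convex_on (ball 0 (norm x + 1)) (\<lambda>p. H p - l / 2 * (norm p)^2)"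
    by (rule obtain_strong_convexity[OF bounded_ball convex_ball])
  have "l / 2 * (norm x)^2 \<le> H x"
    by (rule H_ge_quadratic[OF l]) (auto intro: add_nonneg_pos)
  moreover have "0 < l / 2 * (norm x)^2"
    using \<open>0 < l\<close> assms by simp
  ultimately show ?thesis
    by linarith
qed

lemma H_ge_linear: obtains c where "0 < c" "\<And>y. 1 \<le> norm y \<Longrightarrow> c * norm y \<le> H y"
proof -
  obtain l where "0 < l" and l: "convex_on (ball 0 1) (\<lambda>p. H p - l / 2 * (norm p)^2)"
    by (rule obtain_strong_convexity[OF bounded_ball convex_ball])
  have linear: "l / 4 * norm y \<le> H y" if y: "1 \<le> norm y" for y
  proof -
    define t where "t = 1 / (2 * norm y)"
    have "0 < norm y"
      using y by linarith
    then have t: "0 < t" "t \<le> 1" "norm (t *\<^sub>R y) = 1 / 2"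
      using y by (simp_all add: t_def)
    have "l / 8 = l / 2 * (norm (t *\<^sub>R y))^2"
      unfolding t(3) by (simp add: power2_eq_square)
    also have "\<dots> \<le> H (t *\<^sub>R y)"
      by (rule H_ge_quadratic[OF l]) (use t in auto)
    also have "\<dots> \<le> t * H y"
      using t by (intro H_scaleR_le) auto
    finally show ?thesis
      using \<open>0 < norm y\<close> by (simp add: t_def field_simps)
  qed
  show ?thesis
    by (rule that[of "l / 4"]) (use \<open>0 < l\<close> linear in auto)
qed

lemma open_sublevel: "open {p. H p < c}"
  by (rule open_Collect_less) (auto intro: continuous_at_imp_continuous_on isCont_H)

lemma convex_sublevel: "convex {p. H p < c}"
  unfolding convex_alt
proof (intro ballI allI impI)
  fix x y and u :: real
  assume "x \<in> {p. H p < c}" "y \<in> {p. H p < c}" "0 \<le> u \<and> u \<le> 1"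
  then have "(1 - u) * H x + u * H y < c"
    by (intro convex_bound_lt) auto
  moreover have "H ((1 - u) *\<^sub>R x + u *\<^sub>R y) \<le> (1 - u) * H x + u * H y"
    using convex_onD[OF convex_H, of u x y] \<open>0 \<le> u \<and> u \<le> 1\<close> by simp
  ultimately show "(1 - u) *\<^sub>R x + u *\<^sub>R y \<in> {p. H p < c}"
    by simp
qed

lemma bounded_sublevel: "bounded {p. H p < c}"
proof -
  obtain k where "0 < k" and k: "\<And>y. 1 \<le> norm y \<Longrightarrow> k * norm y \<le> H y"
    using H_ge_linear by blast
  have "{p. H p < c} \<subseteq> cball 0 (max 1 (c / k))"
  proof
    fix p assume "p \<in> {p. H p < c}"
    then have "norm p \<le> c / k" if "1 \<le> norm p"
      using k[OF that] \<open>0 < k\<close> by (simp add: field_simps)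
    then show "p \<in> cball 0 (max 1 (c / k))"
      by (cases "1 \<le> norm p") auto
  qed
  then show ?thesis
    using bounded_cball bounded_subset by blast
qed

lemma vimage_sublevel: "H -` {0..<c} = {p. H p < c}"
  using H_nonneg by auto

lemma hessian_coercive:
  assumes "convex_on U (\<lambda>p. H p - l / 2 * (norm p)^2)" "0 < l" "open U" "x \<in> U"
  shows "coercive_matrix l (D2H x)"
  using hessian_lower_bound[OF assms(1,3,4) H_has_derivative DH_has_derivative] assms(2)
  by (simp add: coercive_matrix_def)

lemma hessian_coercive_on_ball: obtains l where "\<And>q. q \<in> ball p r \<Longrightarrow> coercive_matrix l (D2H q)"
proof -
  obtain l where "0 < l" "convex_on (ball p r) (\<lambda>p. H p - l / 2 * (norm p)^2)"
    by (rule obtain_strong_convexity[OF bounded_ball convex_ball])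
  then show ?thesis
    using hessian_coercive that by blast
qed

lemma hessian_coercive_at: obtains l where "coercive_matrix l (D2H p)"
proof -
  obtain l where "\<And>q. q \<in> ball p 1 \<Longrightarrow> coercive_matrix l (D2H q)"
    using hessian_coercive_on_ball by blast
  then show ?thesis
    by (meson centre_in_ball zero_less_one that)
qed

lemma H_gradient_step_le:
  assumes "0 < L" and concave: "convex_on {p. H p < c} (\<lambda>p. L / 2 * (norm p)^2 - H p)"
    and "H p < c" "H (p - (t / L) *\<^sub>R DH p) < c"
  shows "H (p - (t / L) *\<^sub>R DH p) \<le> H p - (t - t^2 / 2) / L * (norm (DH p))^2"
proof -
  let ?q = "p - (t / L) *\<^sub>R DH p"
  have "H ?q \<le> H p + DH p \<bullet> (?q - p) + L / 2 * (norm (?q - p))^2"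
    using below_tangent_plus_quadratic[OF concave _ _ H_has_derivative, of p ?q] assms(3,4) by simp
  also have "DH p \<bullet> (?q - p) = - (t / L) * (norm (DH p))^2"
    by (simp add: power2_norm_eq_inner)
  also have "(norm (?q - p))^2 = (t / L)^2 * (norm (DH p))^2"
    by (simp add: power_mult_distrib power_divide)
  also have "H p + - (t / L) * (norm (DH p))^2 + L / 2 * ((t / L)^2 * (norm (DH p))^2)
      = H p - (t - t^2 / 2) / L * (norm (DH p))^2"
    using \<open>0 < L\<close> by (simp add: power2_eq_square field_simps)
  finally show ?thesis .
qed

lemma norm_DH_power2_le:
  assumes "0 < L" and concave: "convex_on {p. H p < c} (\<lambda>p. L / 2 * (norm p)^2 - H p)"
    and "H p < c"
  shows "(norm (DH p))^2 \<le> 2 * L * H p"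
proof -
  define q where "q t = p - (t / L) *\<^sub>R DH p" for t
  have step: "H (q t) \<le> H p" if "0 \<le> t" "t \<le> 1" "H (q t) < c" for t
  proof -
    have "t^2 \<le> t"
      using that by (simp add: power2_eq_square mult_left_le_one_le)
    then have "0 \<le> (t - t^2 / 2) / L * (norm (DH p))^2"
      using that \<open>0 < L\<close> by simp
    then show ?thesis
      using H_gradient_step_le[OF assms that(3)[unfolded q_def]] by (simp add: q_def)
  qed
  txt \<open>Along the step \<open>H\<close> stays below \<open>H p\<close> while it is below \<open>c\<close>, so by continuity it can never
    reach the intermediate value \<open>(H p + c) / 2\<close>.\<close>
  have "H (q 1) < c"
  proof (rule ccontr)
    assume "\<not> H (q 1) < c"
    moreover have "continuous_on {0..1} (\<lambda>t. H (q t))"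
      unfolding q_def using \<open>0 < L\<close>
      by (intro continuous_at_imp_continuous_on ballI isCont_o2[OF _ isCont_H] continuous_intros) auto
    ultimately obtain t where t: "0 \<le> t" "t \<le> 1" "H (q t) = (H p + c) / 2"
      using IVT'[of "\<lambda>t. H (q t)" 0 "(H p + c) / 2" 1] \<open>H p < c\<close> by (force simp: q_def)
    then show False
      using step[of t] \<open>H p < c\<close> by simp
  qed
  then have "0 \<le> H p - (1 - 1^2 / 2) / L * (norm (DH p))^2"
    using H_gradient_step_le[OF assms] H_nonneg[of "q 1"] by (force simp: q_def)
  then show ?thesis
    using \<open>0 < L\<close> by (simp add: field_simps)
qed

lemma DH_inner_ge:
  "H p \<le> DH p \<bullet> p"
  using convex_on_above_tangent[OF convex_H _ _ H_has_derivative, of p 0] by (simp add: H_0)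

lemma DH_nonzero:
  assumes "p \<noteq> 0"
  shows "DH p \<noteq> 0"
  using DH_inner_ge[of p] H_pos[OF assms] by auto

lemma newton_denominator_pos:
  assumes "p \<noteq> 0"
  shows "0 < (matrix_inv (D2H p) *v DH p) \<bullet> DH p"
proof -
  obtain l where "coercive_matrix l (D2H p)"
    by (rule hessian_coercive_at)
  then show ?thesis
    using DH_nonzero[OF assms] by (rule coercive_matrix_inv_inner_pos)
qed

section \<open>Lower bounds for \<open>tau_tilde\<close>\<close>

lemma tau_tilde_ge_modulus_ratio:
  assumes "p \<noteq> 0" "H p < c" "0 < l" "0 < L"
    and convex: "convex_on {q. H q < c} (\<lambda>p. H p - l / 2 * (norm p)^2)"
    and concave: "convex_on {q. H q < c} (\<lambda>p. L / 2 * (norm p)^2 - H p)"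
  shows "l / (2 * L) \<le> tau_tilde H DH D2H p" "l \<le> L"
proof -
  have A: "coercive_matrix l (D2H p)"
    using hessian_coercive[OF convex \<open>0 < l\<close> open_sublevel] \<open>H p < c\<close> by simp
  have "l * (norm p)^2 \<le> L * (norm p)^2"
    using coercive_matrixD(2)[OF A, of p] \<open>H p < c\<close>
      hessian_upper_bound[OF concave open_sublevel _ H_has_derivative DH_has_derivative, of p p]
    by simp
  then show "l \<le> L"
    using \<open>p \<noteq> 0\<close> by simp
  let ?d = "(matrix_inv (D2H p) *v DH p) \<bullet> DH p"
  have "?d \<le> (norm (DH p))^2 / l"
    by (rule coercive_matrix_inv_inner_le[OF A])
  also have "\<dots> \<le> 2 * L * H p / l"
    using norm_DH_power2_le[OF \<open>0 < L\<close> concave \<open>H p < c\<close>] \<open>0 < l\<close> by (simp add: divide_right_mono)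
  finally have "?d * l \<le> 2 * L * H p"
    using \<open>0 < l\<close> by (simp add: field_simps)
  then show "l / (2 * L) \<le> tau_tilde H DH D2H p"
    using newton_denominator_pos[OF \<open>p \<noteq> 0\<close>] \<open>0 < L\<close> \<open>p \<noteq> 0\<close>
    by (simp add: tau_tilde_def field_simps)
qed

lemma tau_tilde_ge_admissible_ratio:
  assumes "p \<noteq> 0" "0 < e" "0 < e'" "0 < l" "0 < L"
    and convex: "convex_on (H -` {0..<H p + e}) (\<lambda>p. H p - l / 2 * (norm p)^2)"
    and concave: "convex_on (H -` {0..<H p + e'}) (\<lambda>p. L / 2 * (norm p)^2 - H p)"
  shows "l / (2 * L) \<le> tau_tilde H DH D2H p \<and> l \<le> L"
proof -
  define c where "c = H p + min e e'"
  have "{q. H q < c} \<subseteq> {q. H q < H p + e}" "{q. H q < c} \<subseteq> {q. H q < H p + e'}"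
    by (auto simp: c_def)
  then have "convex_on {q. H q < c} (\<lambda>p. H p - l / 2 * (norm p)^2)"
    "convex_on {q. H q < c} (\<lambda>p. L / 2 * (norm p)^2 - H p)"
    using convex concave convex_sublevel by (auto simp: vimage_sublevel intro: convex_on_subset)
  moreover have "H p < c"
    using assms(2,3) by (simp add: c_def)
  ultimately show ?thesis
    using tau_tilde_ge_modulus_ratio[OF \<open>p \<noteq> 0\<close> _ \<open>0 < l\<close> \<open>0 < L\<close>] by blast
qed

lemma lambdaH_LambdaH_bounds:
  assumes "p \<noteq> 0"
  shows "0 \<le> lambdaH H (H p)" "lambdaH H (H p) \<le> LambdaH H (H p)"
    "lambdaH H (H p) \<le> 2 * tau_tilde H DH D2H p * LambdaH H (H p)" "0 < tau_tilde H DH D2H p"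
proof -
  define S where "S e = {l. l > 0 \<and> convex_on (H -` {0..<H p + e}) (\<lambda>p. H p - l / 2 * (norm p)^2)}" for e
  define T where "T e = {L. L > 0 \<and> convex_on (H -` {0..<H p + e}) (\<lambda>p. L / 2 * (norm p)^2 - H p)}" for e
  let ?\<tau> = "tau_tilde H DH D2H p"
  have S: "S e \<noteq> {}" for e
  proof -
    obtain l where "0 < l" "convex_on {q. H q < H p + e} (\<lambda>p. H p - l / 2 * (norm p)^2)"
      by (rule obtain_strong_convexity[OF bounded_sublevel convex_sublevel])
    then show ?thesis
      by (auto simp: S_def vimage_sublevel)
  qed
  have T: "T e \<noteq> {}" for e
  proof -
    obtain L where "0 < L" "convex_on {q. H q < H p + e} (\<lambda>p. L / 2 * (norm p)^2 - H p)"
      by (rule obtain_strong_concavity[OF bounded_sublevel convex_sublevel])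
    then show ?thesis
      by (auto simp: T_def vimage_sublevel)
  qed
  have admissible: "l / (2 * L) \<le> ?\<tau> \<and> l \<le> L"
    if "0 < e" "0 < e'" "l \<in> S e" "L \<in> T e'" for e e' l L
    using tau_tilde_ge_admissible_ratio[OF assms that(1,2)] that(3,4) by (simp add: S_def T_def)
  obtain l0 L0 where l0: "l0 \<in> S 1" and L0: "L0 \<in> T 1"
    using S T by blast
  then have "0 < l0 / (2 * L0)" "l0 / (2 * L0) \<le> ?\<tau>"
    using admissible[of 1 1 l0 L0] by (auto simp: S_def T_def)
  then show "0 < ?\<tau>"
    by linarith
  have le_tau: "l \<le> (2 * ?\<tau>) * L" if "0 < e" "0 < e'" "l \<in> S e" "L \<in> T e'" for e e' l L
    using admissible[OF that] that(4) by (simp add: T_def field_simps)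
  have le_1: "l \<le> 1 * L" if "0 < e" "0 < e'" "l \<in> S e" "L \<in> T e'" for e e' l L
    using admissible[OF that] by simp
  have "lambdaH H (H p) \<le> 1 * LambdaH H (H p)"
    unfolding lambdaH_def LambdaH_def S_def[symmetric] T_def[symmetric]
    by (rule SUP_Sup_le_mult_INF_Inf[OF _ S T le_1]) simp_all
  then show "lambdaH H (H p) \<le> LambdaH H (H p)"
    by simp
  show "lambdaH H (H p) \<le> 2 * ?\<tau> * LambdaH H (H p)"
    unfolding lambdaH_def LambdaH_def S_def[symmetric] T_def[symmetric]
    by (rule SUP_Sup_le_mult_INF_Inf[OF _ S T le_tau]) (use \<open>0 < ?\<tau>\<close> in simp_all)
  show "0 \<le> lambdaH H (H p)"
    unfolding lambdaH_def S_def[symmetric]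
  proof (rule SUP_Sup_nonneg[OF S])
    show "l \<le> L0" if "0 < e" "l \<in> S e" for e l
      using le_1[OF that(1) zero_less_one that(2) L0] by simp
  qed (simp add: S_def)
qed

lemma tau_tilde_ge_lambdaH_LambdaH:
  assumes "p \<noteq> 0"
  shows "1/2 * (lambdaH H (H p) / LambdaH H (H p))^2 \<le> tau_tilde H DH D2H p"
  using lambdaH_LambdaH_bounds[OF assms] by (rule half_power2_divide_le)

lemma hessian_powr_ineq:
  assumes "0 < \<gamma>" and convex: "convex_on U (\<lambda>p. H p powr \<gamma>)" and "open U" "x \<in> U"
    and pos: "\<And>y. y \<in> U \<Longrightarrow> 0 < H y"
  shows "(1 - \<gamma>) * (DH x \<bullet> v)^2 \<le> (D2H x *v v) \<bullet> v * H x"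
proof -
  define k where "k y = \<gamma> * H y powr (\<gamma> - 1)" for y
  define k' where "k' v = \<gamma> * ((\<gamma> - 1) * H x powr (\<gamma> - 1 - 1) * (DH x \<bullet> v))" for v
  define c where "c = \<gamma> * H x powr (\<gamma> - 1) / H x"
  have "0 < c"
    using \<open>0 < \<gamma>\<close> pos[OF \<open>x \<in> U\<close>] by (simp add: c_def)
  have grad: "((\<lambda>p. H p powr \<gamma>) has_derivative (\<lambda>v. (k y *\<^sub>R DH y) \<bullet> v)) (at y)" if "y \<in> U" for y
    using has_derivative_powr_const[OF H_has_derivative pos[OF that], of \<gamma>] by (simp add: k_def)
  have "(k has_derivative k') (at x)"
    unfolding k_def k'_def
    by (intro has_derivative_mult_right has_derivative_powr_const H_has_derivative pos \<open>x \<in> U\<close>)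
  then have hess: "((\<lambda>y. k y *\<^sub>R DH y) has_derivative (\<lambda>v. k x *\<^sub>R (D2H x *v v) + k' v *\<^sub>R DH x)) (at x)"
    by (rule has_derivative_scaleR[OF _ DH_has_derivative])
  have "0 \<le> (k x *\<^sub>R (D2H x *v v) + k' v *\<^sub>R DH x) \<bullet> v"
    by (rule convex_on_second_derivative_nonneg[OF convex \<open>open U\<close> \<open>x \<in> U\<close> grad hess])
  also have "\<dots> = c * (H x * ((D2H x *v v) \<bullet> v) + (\<gamma> - 1) * (DH x \<bullet> v)^2)"
    using pos[OF \<open>x \<in> U\<close>]
    by (simp add: c_def k_def k'_def inner_add_left powr_diff power2_eq_square field_simps)
  finally have "0 \<le> H x * ((D2H x *v v) \<bullet> v) + (\<gamma> - 1) * (DH x \<bullet> v)^2"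
    using \<open>0 < c\<close> by (simp add: zero_le_mult_iff)
  then show ?thesis
    by (simp add: algebra_simps)
qed

lemma hessian_powr_ineq_sublevel:
  assumes "0 < \<gamma>" and convex: "convex_on (H -` {0..R}) (\<lambda>p. H p powr \<gamma>)"
    and "p \<noteq> 0" "H p \<le> R"
  shows "(1 - \<gamma>) * (DH p \<bullet> v)^2 \<le> (D2H p *v v) \<bullet> v * H p"
proof -
  have inner: "(1 - \<gamma>) * (DH x \<bullet> v)^2 \<le> (D2H x *v v) \<bullet> v * H x" if x: "0 < H x" "H x < R" for x
  proof -
    have "open {y. 0 < H y \<and> H y < R}"
      unfolding Collect_conj_eq
      by (intro open_Int open_Collect_less) (auto intro: continuous_at_imp_continuous_on isCont_H)
    moreover have "x \<in> {y. 0 < H y \<and> H y < R}"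
      using x by simp
    ultimately obtain r where "0 < r" and r: "ball x r \<subseteq> {y. 0 < H y \<and> H y < R}"
      by (rule openE)
    then have "convex_on (ball x r) (\<lambda>p. H p powr \<gamma>)"
      by (intro convex_on_subset[OF convex]) auto
    then show ?thesis
      using r \<open>0 < r\<close> by (intro hessian_powr_ineq[OF \<open>0 < \<gamma>\<close> _ open_ball]) auto
  qed
  txt \<open>Points with \<open>H p = R\<close> have no neighbourhood inside the sublevel set; reach them along
    the ray \<open>s *\<^sub>R p\<close>, \<open>s \<rightarrow> 1\<^sup>-\<close>, on which \<open>H < R\<close>.\<close>
  define F where "F s = (D2H (s *\<^sub>R p) *v v) \<bullet> v * H (s *\<^sub>R p) - (1 - \<gamma>) * (DH (s *\<^sub>R p) \<bullet> v)^2" for s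
  have "((\<lambda>s. s *\<^sub>R p) \<longlongrightarrow> 1 *\<^sub>R p) (at_left 1)"
    by (intro tendsto_intros)
  then have "((\<lambda>s. s *\<^sub>R p) \<longlongrightarrow> p) (at_left 1)"
    by simp
  then have "(F \<longlongrightarrow> F 1) (at_left 1)"
    unfolding F_def
    by (intro tendsto_intros isCont_tendsto_compose[OF isCont_D2H]
        isCont_tendsto_compose[OF isCont_H] isCont_tendsto_compose[OF isCont_DH])
  moreover have "\<forall>\<^sub>F s in at_left 1. s \<in> {0<..<1::real}"
    by (rule eventually_at_left_real) simp
  then have "\<forall>\<^sub>F s in at_left 1. 0 \<le> F s"
  proof eventually_elim
    case (elim s)
    have "H (s *\<^sub>R p) \<le> s * R"
      using H_scaleR_le[of s p] \<open>H p \<le> R\<close> elim by (simp add: order_trans mult_left_mono)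
    also have "\<dots> < R"
      using elim \<open>H p \<le> R\<close> H_pos[OF \<open>p \<noteq> 0\<close>] by simp
    finally show ?case
      using inner[of "s *\<^sub>R p"] H_pos[of "s *\<^sub>R p"] elim \<open>p \<noteq> 0\<close> by (simp add: F_def)
  qed
  ultimately have "0 \<le> F 1"
    by (rule tendsto_lowerbound) simp
  then show ?thesis
    by (simp add: F_def)
qed

lemma tau_tilde_ge_one_minus_gamma:
  assumes "1/2 \<le> \<gamma>" and convex: "convex_on (H -` {0..R}) (\<lambda>p. H p powr \<gamma>)" and "H p \<le> R"
  shows "1 - \<gamma> \<le> tau_tilde H DH D2H p"
proof (cases "p = 0")
  case True
  then show ?thesis
    using assms(1) by (simp add: tau_tilde_def)
next
  case False
  obtain l where A: "coercive_matrix l (D2H p)"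
    by (rule hessian_coercive_at)
  define d where "d = (matrix_inv (D2H p) *v DH p) \<bullet> DH p"
  have "0 < d"
    unfolding d_def using False by (rule newton_denominator_pos)
  have "(1 - \<gamma>) * d^2 \<le> d * H p"
    using hessian_powr_ineq_sublevel[OF _ convex False \<open>H p \<le> R\<close>, of "matrix_inv (D2H p) *v DH p"] assms(1)
    by (simp add: coercive_matrix_inv_right[OF A] d_def inner_commute)
  then have "(1 - \<gamma>) * d \<le> H p"
    using \<open>0 < d\<close> by (simp add: power2_eq_square)
  then show ?thesis
    using False \<open>0 < d\<close> by (simp add: tau_tilde_def d_def field_simps)
qed

section \<open>Continuity of \<open>tau_tilde\<close>\<close>

lemma isCont_tau_tilde_nonzero:
  assumes "p0 \<noteq> 0"
  shows "isCont (tau_tilde H DH D2H) p0"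
proof -
  obtain l where l: "\<And>q. q \<in> ball p0 1 \<Longrightarrow> coercive_matrix l (D2H q)"
    using hessian_coercive_on_ball by blast
  obtain l0 where "coercive_matrix l0 (D2H p0)"
    by (rule hessian_coercive_at)
  moreover have "\<forall>\<^sub>F p in at p0. p \<in> ball p0 1"
    by (rule eventually_at_in_open') simp_all
  then have "\<forall>\<^sub>F p in at p0. coercive_matrix l (D2H p)"
    by eventually_elim (rule l)
  ultimately have "((\<lambda>p. matrix_inv (D2H p) *v DH p) \<longlongrightarrow> matrix_inv (D2H p0) *v DH p0) (at p0)"
    using isCont_D2H isCont_DH by (intro tendsto_coercive_matrix_inv) (auto simp: isCont_def)
  then have "((\<lambda>p. H p / ((matrix_inv (D2H p) *v DH p) \<bullet> DH p)) \<longlongrightarrow> tau_tilde H DH D2H p0) (at p0)"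
    using isCont_H isCont_DH newton_denominator_pos[OF assms] assms
    by (auto intro!: tendsto_intros simp: isCont_def tau_tilde_def)
  moreover have "\<forall>\<^sub>F p in at p0. H p / ((matrix_inv (D2H p) *v DH p) \<bullet> DH p) = tau_tilde H DH D2H p"
    using eventually_neq_at_within[of 0 p0 UNIV] by eventually_elim (simp add: tau_tilde_def)
  ultimately show ?thesis
    unfolding isCont_def by (rule Lim_transform_eventually)
qed

lemma H_quadratic_approx:
  assumes approx: "\<And>z. norm z \<le> norm p \<Longrightarrow> norm (DH z - A0 *v z) \<le> \<eta> * norm z" and "0 \<le> \<eta>"
  shows "\<bar>H p - (A0 *v p) \<bullet> p / 2\<bar> \<le> \<eta> * (norm p)^2"
proof -
  let ?q = "(A0 *v p) \<bullet> p"
  define k where "k t = H (t *\<^sub>R p) - t^2 / 2 * ?q" for t :: real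
  have deriv: "DERIV k t :> (DH (t *\<^sub>R p) - A0 *v (t *\<^sub>R p)) \<bullet> p" for t
  proof -
    have "((\<lambda>t. H (0 + t *\<^sub>R p)) has_real_derivative DH (0 + t *\<^sub>R p) \<bullet> p) (at t)"
      by (rule has_real_derivative_along_line[OF H_has_derivative])
    then show ?thesis
      unfolding k_def
      by (auto intro!: derivative_eq_intros simp: inner_diff_left matrix_vector_mult_scaleR)
  qed
  then obtain \<xi> where "0 < \<xi>" "\<xi> < 1" and mvt: "k 1 - k 0 = (DH (\<xi> *\<^sub>R p) - A0 *v (\<xi> *\<^sub>R p)) \<bullet> p"
    using MVT2[of 0 1 k "\<lambda>t. (DH (t *\<^sub>R p) - A0 *v (t *\<^sub>R p)) \<bullet> p"] deriv by auto
  have "\<bar>H p - ?q / 2\<bar> = \<bar>(DH (\<xi> *\<^sub>R p) - A0 *v (\<xi> *\<^sub>R p)) \<bullet> p\<bar>"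
    using mvt by (simp add: k_def H_0)
  also have "\<dots> \<le> norm (DH (\<xi> *\<^sub>R p) - A0 *v (\<xi> *\<^sub>R p)) * norm p"
    by (rule Cauchy_Schwarz_ineq2)
  also have "\<dots> \<le> (\<eta> * norm (\<xi> *\<^sub>R p)) * norm p"
    using approx[of "\<xi> *\<^sub>R p"] \<open>0 < \<xi>\<close> \<open>\<xi> < 1\<close> by (intro mult_right_mono) (auto simp: mult_left_le_one_le)
  also have "\<dots> \<le> \<eta> * (norm p)^2"
    using \<open>0 < \<xi>\<close> \<open>\<xi> < 1\<close> \<open>0 \<le> \<eta>\<close>
    by (simp add: power2_eq_square mult_left_le_one_le mult_right_le_one_le mult.assoc mult_left_mono)
  finally show ?thesis .
qed

lemma tau_tilde_half_error:
  assumes "p \<noteq> 0" and A: "coercive_matrix l (D2H p)" and A0: "l * (norm p)^2 \<le> (D2H 0 *v p) \<bullet> p"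
    and approx: "\<And>z. norm z \<le> norm p \<Longrightarrow> norm (DH z - D2H 0 *v z) \<le> \<eta> * norm z"
    and "norm (D2H p - D2H 0) \<le> \<eta>" "\<eta> \<le> 1"
    and small: "\<eta> * (2 * (norm (D2H 0) + 1) / l + 1) \<le> l / 2"
  shows "\<bar>tau_tilde H DH D2H p - 1/2\<bar> \<le> (2 * \<eta> + \<eta> * (2 * (norm (D2H 0) + 1) / l + 1)) / l"
proof -
  have "0 \<le> \<eta>"
    using \<open>norm (D2H p - D2H 0) \<le> \<eta>\<close> norm_ge_zero order_trans by blast
  have "\<bar>H p - (D2H 0 *v p) \<bullet> p / 2\<bar> \<le> \<eta> * (norm p)^2"
    using approx \<open>0 \<le> \<eta>\<close> by (rule H_quadratic_approx)
  moreover have "\<bar>(matrix_inv (D2H p) *v DH p) \<bullet> DH p - (D2H 0 *v p) \<bullet> p\<bar>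
      \<le> \<eta> * (2 * (norm (D2H 0) + 1) / l + 1) * (norm p)^2"
    using matrix_inv_inner_approx[OF A approx] assms(5,6) by simp
  ultimately show ?thesis
    using quotient_near_half[OF _ _ A0 small coercive_matrixD(1)[OF A]] \<open>p \<noteq> 0\<close>
    by (simp add: tau_tilde_def)
qed

lemma tau_tilde_near_half:
  obtains C where "0 < C" "\<And>\<eta>. 0 < \<eta> \<Longrightarrow> \<forall>\<^sub>F p in at 0. \<bar>tau_tilde H DH D2H p - 1/2\<bar> \<le> C * \<eta>"
proof -
  obtain l where l: "\<And>q. q \<in> ball 0 1 \<Longrightarrow> coercive_matrix l (D2H q)"
    using hessian_coercive_on_ball by blast
  then have "0 < l"
    using coercive_matrixD(1) centre_in_ball zero_less_one by blast
  define c where "c = 2 * (norm (D2H 0) + 1) / l + 1"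
  have "1 \<le> c"
    using \<open>0 < l\<close> by (simp add: c_def)
  have "\<forall>\<^sub>F p in at 0. \<bar>tau_tilde H DH D2H p - 1/2\<bar> \<le> (2 + c) / l * \<eta>" if "0 < \<eta>" for \<eta>
  proof -
    define \<eta>' where "\<eta>' = min \<eta> (min 1 (l / (2 * c)))"
    have \<eta>': "0 < \<eta>'" "\<eta>' \<le> \<eta>" "\<eta>' \<le> 1" "\<eta>' \<le> l / (2 * c)"
      using \<open>0 < \<eta>\<close> \<open>0 < l\<close> \<open>1 \<le> c\<close> by (auto simp: \<eta>'_def)
    obtain d where "0 < d" and d: "\<And>z. norm z < d \<Longrightarrow> norm (DH z - D2H 0 *v z) \<le> \<eta>' * norm z"
      using DH_has_derivative[of 0] \<open>0 < \<eta>'\<close> unfolding has_derivative_at_alt by (force simp: DH_0)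
    have "\<forall>\<^sub>F p in at 0. norm (D2H p - D2H 0) < \<eta>'"
      using isCont_D2H[of 0] \<open>0 < \<eta>'\<close> by (auto simp: isCont_def dist_norm dest: tendstoD)
    moreover have "\<forall>\<^sub>F p in at 0. p \<in> ball 0 (min d 1) \<and> p \<noteq> 0"
      using eventually_at_ball'[of "min d 1" 0 UNIV] \<open>0 < d\<close> by simp
    ultimately show ?thesis
    proof eventually_elim
      case (elim p)
      have "\<bar>tau_tilde H DH D2H p - 1/2\<bar> \<le> (2 * \<eta>' + \<eta>' * c) / l"
        unfolding c_def
      proof (rule tau_tilde_half_error)
        show "l * (norm p)^2 \<le> (D2H 0 *v p) \<bullet> p"
          using coercive_matrixD(2)[OF l, of 0 p] by simp
        have "\<eta>' * c \<le> l / 2"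
          using \<eta>'(4) \<open>1 \<le> c\<close> by (simp add: field_simps)
        then show "\<eta>' * (2 * (norm (D2H 0) + 1) / l + 1) \<le> l / 2"
          by (simp add: c_def)
      qed (use elim \<eta>' d l in auto)
      also have "\<dots> = (2 + c) / l * \<eta>'"
        by (simp add: field_simps)
      also have "\<dots> \<le> (2 + c) / l * \<eta>"
        using \<eta>'(2) \<open>0 < l\<close> \<open>1 \<le> c\<close> by (intro mult_left_mono) auto
      finally show ?case .
    qed
  qed
  then show ?thesis
    using that[of "(2 + c) / l"] \<open>0 < l\<close> \<open>1 \<le> c\<close> by simp
qed

lemma isCont_tau_tilde_zero: "isCont (tau_tilde H DH D2H) 0"
proof -
  obtain C where "0 < C" and C: "\<And>\<eta>. 0 < \<eta> \<Longrightarrow> \<forall>\<^sub>F p in at 0. \<bar>tau_tilde H DH D2H p - 1/2\<bar> \<le> C * \<eta>"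
    using tau_tilde_near_half by blast
  have "\<forall>\<^sub>F p in at 0. dist (tau_tilde H DH D2H p) (1/2) < \<epsilon>" if "0 < \<epsilon>" for \<epsilon>
    using C[of "\<epsilon> / (2 * C)"] \<open>0 < C\<close> that
    by (auto simp: dist_real_def elim!: eventually_mono)
  then show ?thesis
    by (simp add: isCont_def tendsto_iff tau_tilde_def)
qed

lemma continuous_tau_tilde: "continuous_on UNIV (tau_tilde H DH D2H)"
  using isCont_tau_tilde_zero isCont_tau_tilde_nonzero
  by (metis continuous_at_imp_continuous_on)

end

theorem lemmaA2:
  fixes H :: "real^2 \<Rightarrow> real" and DH :: "real^2 \<Rightarrow> real^2" and D2H :: "real^2 \<Rightarrow> real^2^2"
  assumes C2: "C2_with H DH D2H"
    and H1: "loc_strongly_convex H" "loc_strongly_concave H"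
    and H2: "H 0 = 0" "\<forall>p. H p \<ge> 0"
  shows "continuous_on UNIV (tau_tilde H DH D2H)
     \<and> tau_tilde H DH D2H 0 = 1/2
     \<and> (\<forall>p. p \<noteq> 0 \<longrightarrow>
           tau_tilde H DH D2H p \<ge> 1/2 * (lambdaH H (H p) / LambdaH H (H p))^2)
     \<and> (\<forall>\<gamma> R. 1/2 \<le> \<gamma> \<and> \<gamma> < 1 \<and> R > 0 \<and>
           convex_on (H -` {0..R}) (\<lambda>p. H p powr \<gamma>) \<longrightarrow>
           (\<forall>p \<in> H -` {0..R}. tau_tilde H DH D2H p \<ge> 1 - \<gamma>))"
proof -
  interpret hamiltonian H DH D2H
    using assms by unfold_locales auto
  show ?thesis
  proof (intro conjI allI impI ballI)
    show "continuous_on UNIV (tau_tilde H DH D2H)"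
      by (rule continuous_tau_tilde)
    show "tau_tilde H DH D2H 0 = 1/2"
      by (simp add: tau_tilde_def)
    show "tau_tilde H DH D2H p \<ge> 1/2 * (lambdaH H (H p) / LambdaH H (H p))^2" if "p \<noteq> 0" for p
      using that by (rule tau_tilde_ge_lambdaH_LambdaH)
    show "tau_tilde H DH D2H p \<ge> 1 - \<gamma>"
      if "1/2 \<le> \<gamma> \<and> \<gamma> < 1 \<and> R > 0 \<and> convex_on (H -` {0..R}) (\<lambda>p. H p powr \<gamma>)"
        and "p \<in> H -` {0..R}" for \<gamma> R p
      using that by (intro tau_tilde_ge_one_minus_gamma) auto
  qed
qed

end
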